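(* Let $G$ and $H$ be isomorphic graphs on $n\ge 3$ vertices and let $1\le k\le n-1$. The following are equivalent: 1) $F_k(G)$ is uniquely reconstructible as the $k$-token graph of $G$. 2) $\operatorname{Aut}(F_k(G))\simeq\operatorname{Aut}(G)\times\mathbb{Z}_2$ if $k=n/2$, and $\operatorname{Aut}(F_k(G))\simeq\operatorname{Aut}(G)$ otherwise. 3) For every $\psi\in\operatorname{Iso}(F_k(H),F_k(G))$ there exists $f(\psi)\in\operatorname{Iso}(H,G)$ such that $\psi=\iota(f(\psi))$ or $\psi=\mathfrak{c}\circ\iota(f(\psi))$. 4) There exists a function $f$ assigning to every $\psi\in\operatorname{Iso}(F_k(H),F_k(G))$ a function $f(\psi):V(H)\to V(G)$ such that for every vertex $u$ of $H$, either $\psi(\kappa_H(u,k))=\kappa_G(f(\psi)(u),k)$ or $\psi(\kappa_H(u,k))=\overline{\kappa_G}(f(\psi)(u),k)$.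
   Context: $F_k(G)$ is the graph on the $k$-subsets of $V(G)$ in which $A,B$ are adjacent iff $A\triangle B$ is an edge of $G$. $\operatorname{Iso}(X,Y)$ denotes the set of graph isomorphisms $X\to Y$ and $\operatorname{Aut}(X)$ the automorphism group. For $\psi\in\operatorname{Iso}(H,G)$, $\iota(\psi):V(F_k(H))\to V(F_k(G))$ is $\iota(\psi)(A)=\{\psi(v):v\in A\}$. $\mathfrak{c}$ sends each $k$-subset $A$ of $V(G)$ to $V(G)\setminus A$ (an isomorphism $F_k(G)\to F_{n-k}(G)$). For a vertex $u$ of $G$, $\kappa_G(u,k)=\{A\in V(F_k(G)):u\in A\}$ and $\overline{\kappa_G}(u,k)=\{A\in V(F_k(G)):u\notin A\}$ (similarly for $H$). A $k$-token reconstruction of a graph $F$ is a pair $(G',\varphi)$ with $\varphi$ an isomorphism $F\to F_k(G')$. Two $k$-token reconstructions $(G,\varphi),(G,\psi)$ of $F$ are equivalent if there is $s\in\operatorname{Aut}(G)$ with $\psi=\iota(s)\circ\varphi$ or $\psi=\mathfrak{c}\circ\iota(s)\circ\varphi$. $F$ is uniquely reconstructible as the $k$-token graph of $G$ if any two $k$-token reconstructions of $F$ of the form $(G,\cdot)$ are equivalent. *)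

theory Defs
  imports "HOL-Algebra.Elementary_Groups" "HOL-Library.FuncSet"
begin

record 'a sgraph =
  verts :: "'a set"
  edges :: "'a set set"

definition simple_graph :: "('a, 'm) sgraph_scheme \<Rightarrow> bool" where
  "simple_graph G \<longleftrightarrow> finite (verts G) \<and>
     (\<forall>e \<in> edges G. e \<subseteq> verts G \<and> card e = 2)"

definition Iso :: "('a, 'm) sgraph_scheme \<Rightarrow> ('b, 'n) sgraph_scheme \<Rightarrow> ('a \<Rightarrow> 'b) set" where
  "Iso X Y = {f. f \<in> extensional (verts X) \<and> bij_betw f (verts X) (verts Y) \<and>
     (\<forall>u \<in> verts X. \<forall>v \<in> verts X. {u, v} \<in> edges X \<longleftrightarrow> {f u, f v} \<in> edges Y)}"

definition Aut :: "('a, 'm) sgraph_scheme \<Rightarrow> ('a \<Rightarrow> 'a) set" where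
  "Aut X = Iso X X"

definition isomorphic :: "('a, 'm) sgraph_scheme \<Rightarrow> ('b, 'n) sgraph_scheme \<Rightarrow> bool" where
  "isomorphic X Y \<longleftrightarrow> Iso X Y \<noteq> {}"

definition aut_group :: "('a, 'm) sgraph_scheme \<Rightarrow> ('a \<Rightarrow> 'a) monoid" where
  "aut_group X = \<lparr>carrier = Aut X, mult = (\<lambda>f g. compose (verts X) f g),
                  one = restrict id (verts X)\<rparr>"

definition token_verts :: "('a, 'm) sgraph_scheme \<Rightarrow> nat \<Rightarrow> 'a set set" where
  "token_verts G k = {A. A \<subseteq> verts G \<and> card A = k}"

definition token_graph :: "('a, 'm) sgraph_scheme \<Rightarrow> nat \<Rightarrow> 'a set sgraph" where
  "token_graph G k = \<lparr>verts = token_verts G k,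
     edges = {{A, B} | A B. A \<in> token_verts G k \<and> B \<in> token_verts G k \<and>
                             (A - B) \<union> (B - A) \<in> edges G}\<rparr>"

definition iota :: "('b, 'm) sgraph_scheme \<Rightarrow> nat \<Rightarrow> ('b \<Rightarrow> 'a) \<Rightarrow> ('b set \<Rightarrow> 'a set)" where
  "iota H k psi = restrict (\<lambda>A. psi ` A) (token_verts H k)"

definition cmpl :: "('a, 'm) sgraph_scheme \<Rightarrow> nat \<Rightarrow> ('a set \<Rightarrow> 'a set)" where
  "cmpl G k = restrict (\<lambda>A. verts G - A) (token_verts G k)"

definition kappa :: "('a, 'm) sgraph_scheme \<Rightarrow> 'a \<Rightarrow> nat \<Rightarrow> 'a set set" where
  "kappa G u k = {A \<in> token_verts G k. u \<in> A}"

definition kappa_bar :: "('a, 'm) sgraph_scheme \<Rightarrow> 'a \<Rightarrow> nat \<Rightarrow> 'a set set" where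
  "kappa_bar G u k = {A \<in> token_verts G k. u \<notin> A}"

text \<open>Unique reconstructibility of F_k(G) as the k-token graph of G: any two
  k-token reconstructions (G, phi), (G, psi) of F_k(G) are equivalent.\<close>

definition uniquely_reconstructible :: "('a, 'm) sgraph_scheme \<Rightarrow> nat \<Rightarrow> bool" where
  "uniquely_reconstructible G k \<longleftrightarrow>
     (\<forall>phi \<in> Iso (token_graph G k) (token_graph G k).
      \<forall>psi \<in> Iso (token_graph G k) (token_graph G k).
        (\<exists>s \<in> Aut G.
           psi = compose (token_verts G k) (iota G k s) phi \<or>
           psi = compose (token_verts G k) (cmpl G k) (compose (token_verts G k) (iota G k s) phi)))"

end

theory Submission
  imports Defs
begin

(* An isomorphism F_k(H) -> F_k(G) is induced if it is iota g, or iota g followed by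
   complementation, for an isomorphism g : H -> G; statement 3 says that every isomorphism is
   induced.

   Precomposing with iota of a fixed isomorphism H -> G shows that statement 3 holds for (H, G)
   iff it holds for (G, G). For H = G it is unique reconstructibility, since two reconstructions
   phi, psi differ by the automorphism psi o phi^-1 of F_k(G). The maps s |-> iota s, and
   (s, i) |-> c^i o iota s when n = 2k, are injective homomorphisms from Aut G, resp. Aut G x Z_2,
   into the finite group Aut F_k(G); so an abstract isomorphism exists iff the map is onto, i.e.
   iff every automorphism is induced (for n <> 2k complementation does not preserve k-sets).

   For statement 4, call u flipped when psi maps kappa_H(u) onto kappa_bar_G(f u); then f u lies
   in psi A iff membership of u in A differs from flipping u. Comparing a k-set separating u and v
   with one containing both or neither (this needs n >= 3) shows that f is injective, hence
   bijective; and flipping is constant, since swapping an unflipped vertex of A for a flipped one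
   outside A would make psi A two elements smaller. So psi A is f A or its complement, and f is a
   graph isomorphism because adjacency of token sets means that their symmetric difference is an
   edge. *)

section \<open>Graph isomorphisms\<close>

lemma compose_restrict_id: "f \<in> extensional A \<Longrightarrow> compose A f (\<lambda>x \<in> A. x) = f"
  by (auto simp: compose_def extensional_def)

lemma IsoD:
  assumes "f \<in> Iso X Y"
  shows "f \<in> extensional (verts X)" "bij_betw f (verts X) (verts Y)"
    and "u \<in> verts X \<Longrightarrow> v \<in> verts X \<Longrightarrow> {u, v} \<in> edges X \<longleftrightarrow> {f u, f v} \<in> edges Y"
  using assms by (auto simp: Iso_def)

lemma Iso_compose:
  assumes f: "f \<in> Iso X Y" and g: "g \<in> Iso Y Z"
  shows "compose (verts X) g f \<in> Iso X Z"
proof -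
  have "f u \<in> verts Y" if "u \<in> verts X" for u
    using IsoD(2)[OF f] that bij_betwE by blast
  then show ?thesis
    using IsoD[OF f] IsoD[OF g] bij_betw_compose[OF IsoD(2)[OF f] IsoD(2)[OF g]]
    by (simp add: Iso_def compose_def)
qed

lemma Iso_inv_into:
  assumes f: "f \<in> Iso X Y"
  shows "restrict (inv_into (verts X) f) (verts Y) \<in> Iso Y X"
proof -
  have bf: "bij_betw f (verts X) (verts Y)" using IsoD(2)[OF f] .
  have "{u, v} \<in> edges Y \<longleftrightarrow> {inv_into (verts X) f u, inv_into (verts X) f v} \<in> edges X"
    if "u \<in> verts Y" "v \<in> verts Y" for u v
    using that IsoD(3)[OF f, of "inv_into (verts X) f u" "inv_into (verts X) f v"]
      bij_betw_inv_into_right[OF bf] bij_betwE[OF bij_betw_inv_into[OF bf]] by simp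
  then show ?thesis
    using bij_betw_inv_into[OF bf] by (simp add: Iso_def bij_betw_restrict_eq)
qed

lemma Iso_restrict_id: "restrict id (verts X) \<in> Iso X X"
  unfolding Iso_def by (auto simp: bij_betw_def inj_on_def)

lemma Iso_image_edge_iff:
  assumes "simple_graph X" "simple_graph Y" "g \<in> Iso X Y" "e \<subseteq> verts X"
  shows "e \<in> edges X \<longleftrightarrow> g ` e \<in> edges Y"
proof -
  have "card (g ` e) = card e"
    using IsoD(2)[OF assms(3)] assms(4) by (meson bij_betw_def card_image inj_on_subset)
  then have two: "card e = 2" if "e \<in> edges X \<or> g ` e \<in> edges Y"
    using that assms(1,2) by (auto simp: simple_graph_def)
  show ?thesis
  proof (cases "card e = 2")
    case True
    then obtain u v where "e = {u, v}" by (meson card_2_iff)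
    then show ?thesis using IsoD(3)[OF assms(3)] assms(4) by simp
  qed (use two in blast)
qed

lemma finite_Aut:
  assumes "finite (verts X)"
  shows "finite (Aut X)"
proof (rule finite_subset)
  show "Aut X \<subseteq> verts X \<rightarrow>\<^sub>E verts X"
    by (auto simp: Aut_def Iso_def bij_betw_def PiE_def)
qed (use assms in \<open>simp add: finite_PiE\<close>)

lemma carrier_aut_group [simp]: "carrier (aut_group X) = Aut X"
  by (simp add: aut_group_def)

lemma mult_aut_group [simp]: "x \<otimes>\<^bsub>aut_group X\<^esub> y = compose (verts X) x y"
  by (simp add: aut_group_def)

lemma group_aut_group: "group (aut_group X)"
proof (rule groupI)
  fix x y z assume "x \<in> carrier (aut_group X)" "y \<in> carrier (aut_group X)" "z \<in> carrier (aut_group X)"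
  then have "z \<in> verts X \<rightarrow> verts X" by (simp add: Aut_def bij_betw_imp_funcset IsoD(2))
  then show "x \<otimes>\<^bsub>aut_group X\<^esub> y \<otimes>\<^bsub>aut_group X\<^esub> z = x \<otimes>\<^bsub>aut_group X\<^esub> (y \<otimes>\<^bsub>aut_group X\<^esub> z)"
    by (simp add: compose_assoc)
next
  fix x assume x: "x \<in> carrier (aut_group X)"
  then have bx: "bij_betw x (verts X) (verts X)" and ex: "x \<in> extensional (verts X)"
    by (simp_all add: Aut_def IsoD)
  then show "\<one>\<^bsub>aut_group X\<^esub> \<otimes>\<^bsub>aut_group X\<^esub> x = x"
    using Id_compose[OF bij_betw_imp_funcset[OF bx] ex] by (simp add: aut_group_def id_def)
  have "restrict (inv_into (verts X) x) (verts X) \<in> carrier (aut_group X)"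
    using Iso_inv_into x by (simp add: Aut_def)
  moreover have "restrict (inv_into (verts X) x) (verts X) \<otimes>\<^bsub>aut_group X\<^esub> x = \<one>\<^bsub>aut_group X\<^esub>"
    using compose_inv_into_id[OF bx] by (simp add: aut_group_def id_def)
  ultimately show "\<exists>y \<in> carrier (aut_group X). y \<otimes>\<^bsub>aut_group X\<^esub> x = \<one>\<^bsub>aut_group X\<^esub>" by blast
qed (auto simp: aut_group_def Aut_def Iso_compose Iso_restrict_id)

section \<open>Token sets\<close>

lemma verts_token_graph [simp]: "verts (token_graph G k) = token_verts G k"
  by (simp add: token_graph_def)

lemma token_verts_subset: "A \<in> token_verts G k \<Longrightarrow> A \<subseteq> verts G"
  by (simp add: token_verts_def)

lemma finite_token_verts: "finite (verts G) \<Longrightarrow> finite (token_verts G k)"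
  by (rule finite_subset[of _ "Pow (verts G)"]) (auto simp: token_verts_def)

lemma token_verts_obtain:
  assumes fin: "finite (verts G)" and P: "P \<subseteq> verts G" and Q: "Q \<subseteq> verts G"
    and disj: "P \<inter> Q = {}" and "card P \<le> k" and "k + card Q \<le> card (verts G)"
  obtains A where "A \<in> token_verts G k" "P \<subseteq> A" "A \<inter> Q = {}"
proof -
  have "P \<subseteq> verts G - Q" using P disj by blast
  then have "card (verts G - Q - P) = card (verts G) - card Q - card P"
    using fin Q by (simp add: card_Diff_subset finite_subset)
  moreover have "k - card P \<le> card (verts G) - card Q - card P" using assms(5,6) by linarith
  ultimately obtain B where B: "B \<subseteq> verts G - Q - P" "card B = k - card P"
    using obtain_subset_with_card_n by metis
  have "finite P" "finite B" using fin P B(1) by (auto intro: finite_subset)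
  then have "card (P \<union> B) = k"
    using B assms by (subst card_Un_disjoint) auto
  moreover have "P \<union> B \<subseteq> verts G" "(P \<union> B) \<inter> Q = {}" using P B(1) disj by auto
  ultimately show thesis using that[of "P \<union> B"] by (simp add: token_verts_def)
qed

lemma token_verts_obtain_separating:
  assumes "finite (verts G)" "u \<in> verts G" "v \<in> verts G" "u \<noteq> v" "1 \<le> k" "k + 1 \<le> card (verts G)"
  obtains A where "A \<in> token_verts G k" "u \<in> A" "v \<notin> A"
  using token_verts_obtain[of G "{u}" "{v}" k] assms by auto

lemma token_verts_swap:
  assumes fin: "finite (verts G)" and A: "A \<in> token_verts G k"
    and "u \<in> A" "v \<in> verts G" "v \<notin> A"
  shows "insert v (A - {u}) \<in> token_verts G k"
proof -
  have "finite A" using A fin by (meson finite_subset token_verts_subset)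
  then have "card A > 0" using \<open>u \<in> A\<close> card_gt_0_iff by blast
  then show ?thesis using A assms(3-) \<open>finite A\<close> by (auto simp: token_verts_def card_Diff_singleton)
qed

lemma token_verts_image:
  assumes g: "bij_betw g (verts H) (verts G)" and A: "A \<in> token_verts H k"
  shows "g ` A \<in> token_verts G k"
proof -
  have "inj_on g A" using g token_verts_subset[OF A] by (meson bij_betw_def inj_on_subset)
  then show ?thesis
    using A bij_betw_imp_surj_on[OF g] by (auto simp: token_verts_def card_image)
qed

lemma token_verts_complement:
  assumes "finite (verts G)" "card (verts G) = 2 * k" "A \<in> token_verts G k"
  shows "verts G - A \<in> token_verts G k"
  using assms by (auto simp: token_verts_def card_Diff_subset finite_subset)

lemma edges_token_graph_iff:
  assumes "A \<in> token_verts G k" "B \<in> token_verts G k"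
  shows "{A, B} \<in> edges (token_graph G k) \<longleftrightarrow> sym_diff A B \<in> edges G"
proof
  assume "{A, B} \<in> edges (token_graph G k)"
  then obtain A' B' where "{A, B} = {A', B'}" "(A' - B') \<union> (B' - A') \<in> edges G"
    by (auto simp: token_graph_def)
  then show "sym_diff A B \<in> edges G" by (metis Un_commute doubleton_eq_iff)
qed (use assms in \<open>auto simp: token_graph_def\<close>)

lemma inj_on_image_sym_diff:
  assumes "inj_on g V" "A \<subseteq> V" "B \<subseteq> V"
  shows "g ` sym_diff A B = sym_diff (g ` A) (g ` B)"
  using inj_on_image_set_diff[OF assms(1), of A B] inj_on_image_set_diff[OF assms(1), of B A] assms(2,3)
  by (auto simp: image_Un)

lemma sym_diff_Diff_Diff:
  "X \<subseteq> V \<Longrightarrow> Y \<subseteq> V \<Longrightarrow> sym_diff (V - X) (V - Y) = sym_diff X Y"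
  by blast

section \<open>Maps induced on token graphs\<close>

definition induced_map ::
    "('b, 'n) sgraph_scheme \<Rightarrow> ('a, 'm) sgraph_scheme \<Rightarrow> nat \<Rightarrow> ('b \<Rightarrow> 'a) \<Rightarrow> bool \<Rightarrow> 'b set \<Rightarrow> 'a set"
  where "induced_map H G k g c =
    (if c then compose (token_verts H k) (cmpl G k) (iota H k g) else iota H k g)"

lemma iota_apply [simp]: "A \<in> token_verts H k \<Longrightarrow> iota H k g A = g ` A"
  by (simp add: iota_def)

lemma cmpl_apply [simp]: "A \<in> token_verts G k \<Longrightarrow> cmpl G k A = verts G - A"
  by (simp add: cmpl_def)

lemma induced_map_apply:
  assumes "bij_betw g (verts H) (verts G)" "A \<in> token_verts H k"
  shows "induced_map H G k g c A = (if c then verts G - g ` A else g ` A)"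
  using token_verts_image[OF assms] assms(2) by (simp add: induced_map_def compose_def)

lemma induced_map_extensional: "induced_map H G k g c \<in> extensional (token_verts H k)"
  by (simp add: induced_map_def iota_def)

lemma iota_restrict_id: "iota H k (\<lambda>x \<in> verts H. x) = (\<lambda>A \<in> token_verts H k. A)"
  by (rule extensionalityI[of _ "token_verts H k"])
    (auto simp: iota_def dest!: token_verts_subset)

lemma bij_betw_iota:
  assumes g: "bij_betw g (verts H) (verts G)"
  shows "bij_betw (iota H k g) (token_verts H k) (token_verts G k)"
proof -
  have "bij_betw (\<lambda>A. g ` A) (token_verts H k) (token_verts G k)"
  proof (rule bij_betw_byWitness[where f' = "\<lambda>B. inv_into (verts H) g ` B"])
    show "\<forall>A \<in> token_verts H k. inv_into (verts H) g ` g ` A = A"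
      using g by (metis bij_betw_def inv_into_image_cancel token_verts_subset)
    show "\<forall>B \<in> token_verts G k. g ` inv_into (verts H) g ` B = B"
      using g by (metis bij_betw_def image_inv_into_cancel token_verts_subset)
    show "(\<lambda>A. g ` A) ` token_verts H k \<subseteq> token_verts G k"
      using token_verts_image[OF g] by blast
    show "(\<lambda>B. inv_into (verts H) g ` B) ` token_verts G k \<subseteq> token_verts H k"
      using token_verts_image[OF bij_betw_inv_into[OF g]] by blast
  qed
  then show ?thesis by (simp add: iota_def bij_betw_restrict_eq)
qed

lemma iota_Iso:
  assumes sH: "simple_graph H" and sG: "simple_graph G" and g: "g \<in> Iso H G"
  shows "iota H k g \<in> Iso (token_graph H k) (token_graph G k)"
  unfolding Iso_def
proof (intro CollectI conjI ballI)
  have bg: "bij_betw g (verts H) (verts G)" using IsoD(2)[OF g] .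
  then show "bij_betw (iota H k g) (verts (token_graph H k)) (verts (token_graph G k))"
    using bij_betw_iota by simp
  fix A B assume "A \<in> verts (token_graph H k)" "B \<in> verts (token_graph H k)"
  then have A: "A \<in> token_verts H k" and B: "B \<in> token_verts H k" by simp_all
  have sub: "A \<subseteq> verts H" "B \<subseteq> verts H" using A B by (simp_all add: token_verts_subset)
  have "{A, B} \<in> edges (token_graph H k) \<longleftrightarrow> sym_diff A B \<in> edges H"
    by (rule edges_token_graph_iff[OF A B])
  also have "\<dots> \<longleftrightarrow> g ` sym_diff A B \<in> edges G"
    by (rule Iso_image_edge_iff[OF sH sG g]) (use sub in blast)
  also have "\<dots> \<longleftrightarrow> {g ` A, g ` B} \<in> edges (token_graph G k)"
    using inj_on_image_sym_diff[OF bij_betw_imp_inj_on[OF bg] sub]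
      edges_token_graph_iff[OF token_verts_image[OF bg A] token_verts_image[OF bg B]] by simp
  finally show "{A, B} \<in> edges (token_graph H k) \<longleftrightarrow>
      {iota H k g A, iota H k g B} \<in> edges (token_graph G k)"
    using A B by simp
qed (simp add: iota_def)

lemma Iso_cmpl:
  assumes "finite (verts G)" "card (verts G) = 2 * k"
  shows "cmpl G k \<in> Iso (token_graph G k) (token_graph G k)"
proof -
  have "bij_betw (\<lambda>A. verts G - A) (token_verts G k) (token_verts G k)"
    by (rule bij_betw_byWitness[where f' = "\<lambda>A. verts G - A"])
      (use token_verts_complement[OF assms] in \<open>auto dest: token_verts_subset\<close>)
  moreover have "{A, B} \<in> edges (token_graph G k) \<longleftrightarrow>
      {verts G - A, verts G - B} \<in> edges (token_graph G k)"
    if "A \<in> token_verts G k" "B \<in> token_verts G k" for A B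
    using that edges_token_graph_iff token_verts_complement[OF assms]
      sym_diff_Diff_Diff[OF token_verts_subset token_verts_subset] by metis
  ultimately show ?thesis by (simp add: Iso_def cmpl_def bij_betw_restrict_eq)
qed

lemma induced_map_Iso:
  assumes sH: "simple_graph H" and sG: "simple_graph G" and g: "g \<in> Iso H G"
    and half: "c \<Longrightarrow> card (verts G) = 2 * k"
  shows "induced_map H G k g c \<in> Iso (token_graph H k) (token_graph G k)"
proof (cases c)
  case True
  have "finite (verts G)" using sG by (simp add: simple_graph_def)
  then show ?thesis
    using Iso_compose[OF iota_Iso[OF sH sG g] Iso_cmpl] half True by (simp add: induced_map_def)
qed (simp add: induced_map_def iota_Iso[OF sH sG g])

lemma induced_map_compose:
  assumes t: "bij_betw t (verts X) (verts Y)" and s: "bij_betw s (verts Y) (verts Z)"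
    and half: "d \<Longrightarrow> finite (verts Y) \<and> card (verts Y) = 2 * k"
  shows "compose (token_verts X k) (induced_map Y Z k s c) (induced_map X Y k t d) =
    induced_map X Z k (compose (verts X) s t) (c \<noteq> d)"
proof (rule extensionalityI[OF compose_extensional induced_map_extensional])
  fix A assume A: "A \<in> token_verts X k"
  let ?B = "induced_map X Y k t d A"
  have B: "?B = (if d then verts Y - t ` A else t ` A)" "?B \<in> token_verts Y k"
    using induced_map_apply[OF t A] token_verts_image[OF t A] token_verts_complement half by auto
  have stA: "compose (verts X) s t ` A = s ` t ` A"
    using token_verts_subset[OF A] by (auto simp: compose_def)
  have tA: "t ` A \<subseteq> verts Y" using token_verts_subset[OF token_verts_image[OF t A]] .
  then have stZ: "s ` t ` A \<subseteq> verts Z" using bij_betw_imp_surj_on[OF s] by blast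
  have sY: "s ` (verts Y - t ` A) = verts Z - s ` t ` A"
    using inj_on_image_set_diff[OF bij_betw_imp_inj_on[OF s] _ tA] bij_betw_imp_surj_on[OF s] by simp
  have "compose (token_verts X k) (induced_map Y Z k s c) (induced_map X Y k t d) A =
      induced_map Y Z k s c ?B"
    using A by (simp add: compose_eq)
  also have "\<dots> = (if c then verts Z - s ` ?B else s ` ?B)"
    by (rule induced_map_apply[OF s B(2)])
  also have "\<dots> = induced_map X Z k (compose (verts X) s t) (c \<noteq> d) A"
    unfolding induced_map_apply[OF bij_betw_compose[OF t s] A] stA B(1)
    using stZ sY by (cases c; cases d) (simp_all add: double_diff)
  finally show "compose (token_verts X k) (induced_map Y Z k s c) (induced_map X Y k t d) A =
    induced_map X Z k (compose (verts X) s t) (c \<noteq> d) A" .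
qed

lemma sym_diff_induced_map:
  assumes g: "bij_betw g (verts H) (verts G)" and A: "A \<in> token_verts H k" and B: "B \<in> token_verts H k"
  shows "sym_diff (induced_map H G k g c A) (induced_map H G k g c B) = g ` sym_diff A B"
proof -
  have "A \<subseteq> verts H" "B \<subseteq> verts H" using A B by (simp_all add: token_verts_subset)
  moreover have "g ` A \<subseteq> verts G" "g ` B \<subseteq> verts G"
    using token_verts_image[OF g A] token_verts_image[OF g B] by (simp_all add: token_verts_subset)
  ultimately show ?thesis
    using inj_on_image_sym_diff[OF bij_betw_imp_inj_on[OF g]] sym_diff_Diff_Diff[of "g ` A" "verts G" "g ` B"]
    by (simp add: induced_map_apply[OF g A] induced_map_apply[OF g B])
qed

lemma Iso_if_induced_map_Iso:
  assumes sH: "simple_graph H" and sG: "simple_graph G"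
    and g: "bij_betw g (verts H) (verts G)" "g \<in> extensional (verts H)"
    and psi: "induced_map H G k g c \<in> Iso (token_graph H k) (token_graph G k)"
    and k: "1 \<le> k" "k + 1 \<le> card (verts H)"
  shows "g \<in> Iso H G"
  unfolding Iso_def
proof (intro CollectI conjI ballI)
  fix u v assume u: "u \<in> verts H" and v: "v \<in> verts H"
  show "{u, v} \<in> edges H \<longleftrightarrow> {g u, g v} \<in> edges G"
  proof (cases "u = v")
    case True
    then show ?thesis using sH sG by (auto simp: simple_graph_def)
  next
    case False
    have fin: "finite (verts H)" using sH by (simp add: simple_graph_def)
    obtain A where A: "A \<in> token_verts H k" "u \<in> A" "v \<notin> A"
      using token_verts_obtain_separating[OF fin u v False k] .
    define B where "B = insert v (A - {u})"
    have B: "B \<in> token_verts H k" using token_verts_swap[OF fin A(1,2) v A(3)] by (simp add: B_def)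
    have AB: "sym_diff A B = {u, v}" using A False by (auto simp: B_def)
    let ?psi = "induced_map H G k g c"
    have psiAB: "?psi A \<in> token_verts G k" "?psi B \<in> token_verts G k"
      using IsoD(2)[OF psi] A(1) B by (auto dest: bij_betwE)
    have "{u, v} \<in> edges H \<longleftrightarrow> {A, B} \<in> edges (token_graph H k)"
      using edges_token_graph_iff[OF A(1) B] AB by simp
    also have "\<dots> \<longleftrightarrow> {?psi A, ?psi B} \<in> edges (token_graph G k)"
      using IsoD(3)[OF psi] A(1) B by simp
    also have "\<dots> \<longleftrightarrow> {g u, g v} \<in> edges G"
      using edges_token_graph_iff[OF psiAB] sym_diff_induced_map[OF g(1) A(1) B] AB by simp
    finally show ?thesis .
  qed
qed (use g in auto)

lemma card_verts_double_if_induced_cmpl_Iso: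
  assumes g: "bij_betw g (verts H) (verts G)" and fin: "finite (verts G)" and k: "k \<le> card (verts H)"
    and psi: "induced_map H G k g True \<in> Iso (token_graph H k) (token_graph G k)"
  shows "card (verts G) = 2 * k"
proof -
  have "finite (verts H)" using g fin bij_betw_finite by blast
  then obtain A where A: "A \<in> token_verts H k"
    using token_verts_obtain[of H "{}" "{}" k] k by auto
  have gA: "g ` A \<in> token_verts G k" using token_verts_image[OF g A] .
  have "induced_map H G k g True A \<in> token_verts G k"
    using bij_betwE[OF IsoD(2)[OF psi]] A by simp
  then have "verts G - g ` A \<in> token_verts G k" by (simp add: induced_map_apply[OF g A])
  moreover have "card (verts G - g ` A) = card (verts G) - k"
    using gA fin card_Diff_subset[OF finite_subset] by (auto simp: token_verts_def)
  ultimately have "card (verts G) - k = k" by (simp add: token_verts_def)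
  then show ?thesis using k bij_betw_same_card[OF g] by linarith
qed

lemma Iso_eq_if_images_eq:
  assumes fin: "finite (verts H)" and s: "s \<in> Iso H G" and t: "t \<in> Iso H G"
    and k: "1 \<le> k" "k + 1 \<le> card (verts H)"
    and images: "\<And>A. A \<in> token_verts H k \<Longrightarrow> s ` A = t ` A"
  shows "s = t"
proof (rule extensionalityI[OF IsoD(1)[OF s] IsoD(1)[OF t]])
  fix v assume v: "v \<in> verts H"
  show "s v = t v"
  proof (rule ccontr)
    assume ne: "s v \<noteq> t v"
    have "s v \<in> verts G" using bij_betwE[OF IsoD(2)[OF s]] v by blast
    then obtain w where w: "w \<in> verts H" "t w = s v"
      using bij_betw_imp_surj_on[OF IsoD(2)[OF t]] by (metis imageE)
    then have "v \<noteq> w" using ne by auto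
    then obtain A where A: "A \<in> token_verts H k" "v \<in> A" "w \<notin> A"
      using token_verts_obtain_separating[OF fin v w(1) _ k] by blast
    then have "t w \<in> t ` A" using images w(2) by blast
    then show False
      using inj_on_image_mem_iff[OF bij_betw_imp_inj_on[OF IsoD(2)[OF t]] w(1) token_verts_subset[OF A(1)]]
        A(3) by simp
  qed
qed

lemma image_ne_complement_image:
  assumes s: "bij_betw s (verts H) (verts G)" and t: "bij_betw t (verts H) (verts G)"
    and fin: "finite (verts H)" and k: "2 \<le> k" "k \<le> card (verts H)"
  shows "\<exists>A \<in> token_verts H k. s ` A \<noteq> verts G - t ` A"
proof -
  obtain v where v: "v \<in> verts H" using k by fastforce
  then obtain w where w: "w \<in> verts H" "t w = s v"
    using bij_betwE[OF s] bij_betw_imp_surj_on[OF t] by (metis imageE)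
  have "card {v, w} \<le> k" using k by (simp add: card_insert_if)
  then obtain A where A: "A \<in> token_verts H k" "{v, w} \<subseteq> A"
    using token_verts_obtain[OF fin, of "{v, w}" "{}" k] v w k by auto
  then have "s v \<in> s ` A" "s v \<in> t ` A" using w(2) by (auto intro: image_eqI[of _ _ w])
  then show ?thesis using A(1) by blast
qed

lemma induced_map_eq_iff:
  assumes fin: "finite (verts H)" and s: "s \<in> Iso H G" and t: "t \<in> Iso H G"
    and k: "2 \<le> k" "k + 1 \<le> card (verts H)"
  shows "induced_map H G k s c = induced_map H G k t d \<longleftrightarrow> s = t \<and> c = d"
proof
  assume eq: "induced_map H G k s c = induced_map H G k t d"
  have images: "(if c then verts G - s ` A else s ` A) = (if d then verts G - t ` A else t ` A)"
    and sub: "s ` A \<subseteq> verts G" "t ` A \<subseteq> verts G"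
    if A: "A \<in> token_verts H k" for A
    using fun_cong[OF eq, of A] induced_map_apply[OF IsoD(2)[OF s] A] induced_map_apply[OF IsoD(2)[OF t] A]
      token_verts_subset[OF token_verts_image[OF IsoD(2)[OF s] A]]
      token_verts_subset[OF token_verts_image[OF IsoD(2)[OF t] A]] by simp_all
  show "s = t \<and> c = d"
  proof (cases "c = d")
    case True
    then have "s ` A = t ` A" if "A \<in> token_verts H k" for A
      using images[OF that] sub[OF that] by (cases c) (simp_all, blast)
    moreover have "1 \<le> k" using k by simp
    ultimately show ?thesis using Iso_eq_if_images_eq[OF fin s t _ k(2)] True by blast
  next
    case False
    then have "s ` A = verts G - t ` A" if "A \<in> token_verts H k" for A
      using images[OF that] sub[OF that] by (cases c) auto
    then show ?thesis
      using image_ne_complement_image[OF IsoD(2)[OF s] IsoD(2)[OF t] fin k(1)] k by auto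
  qed
qed simp

section \<open>Induced isomorphisms of token graphs\<close>

definition token_isos_induced :: "('b, 'n) sgraph_scheme \<Rightarrow> ('a, 'm) sgraph_scheme \<Rightarrow> nat \<Rightarrow> bool"
  where "token_isos_induced H G k \<longleftrightarrow>
    (\<forall>psi \<in> Iso (token_graph H k) (token_graph G k). \<exists>g \<in> Iso H G. \<exists>c. psi = induced_map H G k g c)"

lemma ex_induced_map_iff:
  "(\<exists>c. psi = induced_map H G k g c) \<longleftrightarrow>
     psi = iota H k g \<or> psi = compose (token_verts H k) (cmpl G k) (iota H k g)"
  by (metis induced_map_def)

lemma token_isos_induced_iff:
  "token_isos_induced H G k \<longleftrightarrow>
    (\<forall>psi \<in> Iso (token_graph H k) (token_graph G k). \<exists>g \<in> Iso H G.
       psi = iota H k g \<or> psi = compose (token_verts H k) (cmpl G k) (iota H k g))"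
  by (simp add: token_isos_induced_def ex_induced_map_iff)

lemma token_isos_induced_transport:
  assumes sX: "simple_graph X" and sY: "simple_graph Y"
    and h: "h \<in> Iso Y X" and induced: "token_isos_induced X Z k"
  shows "token_isos_induced Y Z k"
  unfolding token_isos_induced_def
proof
  fix psi assume psi: "psi \<in> Iso (token_graph Y k) (token_graph Z k)"
  let ?h' = "restrict (inv_into (verts Y) h) (verts X)"
  have bh: "bij_betw h (verts Y) (verts X)" using IsoD(2)[OF h] .
  have h': "?h' \<in> Iso X Y" using Iso_inv_into[OF h] .
  have "compose (token_verts X k) psi (iota X k ?h') \<in> Iso (token_graph X k) (token_graph Z k)"
    using Iso_compose[OF iota_Iso[OF sX sY h'] psi] by simp
  then obtain g c where g: "g \<in> Iso X Z"
    and c: "compose (token_verts X k) psi (iota X k ?h') = induced_map X Z k g c"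
    using induced by (auto simp: token_isos_induced_def)
  have iota_h: "iota Y k h \<in> token_verts Y k \<rightarrow> token_verts X k"
    using bij_betw_imp_funcset[OF bij_betw_iota[OF bh]] .
  have "psi = compose (token_verts Y k) psi (iota Y k (\<lambda>x \<in> verts Y. x))"
    using compose_restrict_id[OF IsoD(1)[OF psi]] by (simp add: iota_restrict_id)
  also have "\<dots> = compose (token_verts Y k) psi (compose (token_verts Y k) (iota X k ?h') (iota Y k h))"
    using induced_map_compose[OF bh IsoD(2)[OF h'], of False k False] compose_inv_into_id[OF bh]
    by (simp add: induced_map_def)
  also have "\<dots> = compose (token_verts Y k) (compose (token_verts X k) psi (iota X k ?h')) (iota Y k h)"
    by (rule compose_assoc[OF iota_h])
  also have "\<dots> = compose (token_verts Y k) (induced_map X Z k g c) (induced_map Y X k h False)"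
    unfolding c by (simp add: induced_map_def[of Y X k h False])
  also have "\<dots> = induced_map Y Z k (compose (verts Y) g h) c"
    using induced_map_compose[OF bh IsoD(2)[OF g]] by simp
  finally show "\<exists>g \<in> Iso Y Z. \<exists>c. psi = induced_map Y Z k g c"
    using Iso_compose[OF h g] by blast
qed

lemma uniquely_reconstructible_iff_induced_map:
  "uniquely_reconstructible G k \<longleftrightarrow>
    (\<forall>phi \<in> Iso (token_graph G k) (token_graph G k). \<forall>psi \<in> Iso (token_graph G k) (token_graph G k).
       \<exists>s \<in> Aut G. \<exists>c. psi = compose (token_verts G k) (induced_map G G k s c) phi)"
proof -
  let ?T = "token_verts G k"
  have funcset: "phi \<in> ?T \<rightarrow> ?T" if "phi \<in> Iso (token_graph G k) (token_graph G k)" for phi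
    using bij_betw_imp_funcset[OF IsoD(2)[OF that]] by simp
  have compose_induced_map: "compose ?T (induced_map G G k s c) phi =
      (if c then compose ?T (cmpl G k) (compose ?T (iota G k s) phi) else compose ?T (iota G k s) phi)"
    if "phi \<in> Iso (token_graph G k) (token_graph G k)" for phi s c
    by (simp add: induced_map_def compose_assoc[OF funcset[OF that]])
  show ?thesis
    unfolding uniquely_reconstructible_def by (auto simp: compose_induced_map ex_bool_eq)
qed

lemma uniquely_reconstructible_iff:
  "uniquely_reconstructible G k \<longleftrightarrow> token_isos_induced G G k"
  unfolding uniquely_reconstructible_iff_induced_map
proof
  let ?T = "token_verts G k" and ?F = "token_graph G k"
  assume reconstr: "\<forall>phi \<in> Iso ?F ?F. \<forall>psi \<in> Iso ?F ?F. \<exists>s \<in> Aut G. \<exists>c.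
      psi = compose ?T (induced_map G G k s c) phi"
  show "token_isos_induced G G k" unfolding token_isos_induced_def
  proof
    fix psi assume psi: "psi \<in> Iso ?F ?F"
    have "(\<lambda>A \<in> ?T. A) \<in> Iso ?F ?F" using Iso_restrict_id[of ?F] by (simp add: id_def)
    then obtain s c where s: "s \<in> Aut G"
      and "psi = compose ?T (induced_map G G k s c) (\<lambda>A \<in> ?T. A)"
      using reconstr psi by blast
    then have "psi = induced_map G G k s c"
      by (simp add: compose_restrict_id[OF induced_map_extensional])
    then show "\<exists>g \<in> Iso G G. \<exists>c. psi = induced_map G G k g c"
      using s by (auto simp: Aut_def)
  qed
next
  let ?T = "token_verts G k" and ?F = "token_graph G k"
  assume induced: "token_isos_induced G G k"
  show "\<forall>phi \<in> Iso ?F ?F. \<forall>psi \<in> Iso ?F ?F. \<exists>s \<in> Aut G. \<exists>c.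
      psi = compose ?T (induced_map G G k s c) phi"
  proof (intro ballI)
    fix phi psi assume phi: "phi \<in> Iso ?F ?F" and psi: "psi \<in> Iso ?F ?F"
    let ?phi' = "restrict (inv_into ?T phi) ?T"
    have "compose ?T psi ?phi' \<in> Iso ?F ?F"
      using Iso_compose[OF Iso_inv_into[OF phi] psi] by simp
    then obtain s c where s: "s \<in> Aut G" and c: "compose ?T psi ?phi' = induced_map G G k s c"
      using induced by (auto simp: token_isos_induced_def Aut_def)
    have bphi: "bij_betw phi ?T ?T" using IsoD(2)[OF phi] by simp
    have "psi = compose ?T psi (compose ?T ?phi' phi)"
      using compose_inv_into_id[OF bphi] compose_restrict_id[OF IsoD(1)[OF psi]] by simp
    also have "\<dots> = compose ?T (induced_map G G k s c) phi"
      by (simp add: compose_assoc[OF bij_betw_imp_funcset[OF bphi]] c)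
    finally show "\<exists>s \<in> Aut G. \<exists>c. psi = compose ?T (induced_map G G k s c) phi"
      using s by blast
  qed
qed

section \<open>Characterisation through the sets kappa\<close>

lemma image_kappa_eq_iff:
  assumes psi: "bij_betw psi (token_verts H k) (token_verts G k)"
  shows "psi ` kappa H u k = (if c then kappa_bar G x k else kappa G x k) \<longleftrightarrow>
    (\<forall>A \<in> token_verts H k. x \<in> psi A \<longleftrightarrow> (u \<in> A \<longleftrightarrow> \<not> c))"
proof -
  let ?S = "{A \<in> token_verts H k. x \<in> psi A \<longleftrightarrow> \<not> c}"
  have "(if c then kappa_bar G x k else kappa G x k) = {B \<in> token_verts G k. x \<in> B \<longleftrightarrow> \<not> c}"
    by (auto simp: kappa_def kappa_bar_def)
  also have "\<dots> = psi ` ?S"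
    using bij_betw_imp_surj_on[OF psi] by blast
  finally have "psi ` kappa H u k = (if c then kappa_bar G x k else kappa G x k) \<longleftrightarrow> kappa H u k = ?S"
    using inj_on_image_eq_iff[OF bij_betw_imp_inj_on[OF psi]] by (simp add: kappa_def)
  then show ?thesis by (auto simp: kappa_def)
qed

lemma induced_map_image_kappa:
  assumes g: "bij_betw g (verts H) (verts G)" and u: "u \<in> verts H"
    and psi: "bij_betw (induced_map H G k g c) (token_verts H k) (token_verts G k)"
  shows "induced_map H G k g c ` kappa H u k = (if c then kappa_bar G (g u) k else kappa G (g u) k)"
proof -
  have "g u \<in> induced_map H G k g c A \<longleftrightarrow> (u \<in> A \<longleftrightarrow> \<not> c)" if A: "A \<in> token_verts H k" for A
    using induced_map_apply[OF g A] inj_on_image_mem_iff[OF bij_betw_imp_inj_on[OF g] u token_verts_subset[OF A]]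
      bij_betwE[OF g] u by auto
  then show ?thesis using image_kappa_eq_iff[OF psi] by blast
qed

(* The data of statement 4 for a single psi: by image_kappa_eq_iff, f_mem_psi says that psi maps
   kappa H u k onto kappa_bar G (f u) k if flip u, and onto kappa G (f u) k otherwise. *)
locale kappa_labelled_token_iso =
  fixes H :: "('b, 'n) sgraph_scheme" and G :: "('a, 'm) sgraph_scheme" and k :: nat
    and psi :: "'b set \<Rightarrow> 'a set" and f :: "'b \<Rightarrow> 'a" and flip :: "'b \<Rightarrow> bool"
  assumes simple_H: "simple_graph H" and simple_G: "simple_graph G"
    and psi: "psi \<in> Iso (token_graph H k) (token_graph G k)"
    and card_verts_eq: "card (verts H) = card (verts G)"
    and three_le_card: "3 \<le> card (verts G)"
    and k_ge: "1 \<le> k" and k_le: "k + 1 \<le> card (verts G)"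
    and f_in: "u \<in> verts H \<Longrightarrow> f u \<in> verts G"
    and f_mem_psi: "u \<in> verts H \<Longrightarrow> A \<in> token_verts H k \<Longrightarrow> f u \<in> psi A \<longleftrightarrow> (u \<in> A \<longleftrightarrow> \<not> flip u)"
begin

lemma finite_verts_H: "finite (verts H)"
  using simple_H by (simp add: simple_graph_def)

lemma psi_in_token_verts: "A \<in> token_verts H k \<Longrightarrow> psi A \<in> token_verts G k"
  using bij_betwE[OF IsoD(2)[OF psi]] by simp

lemma inj_f: "inj_on f (verts H)"
proof (rule inj_onI, rule ccontr)
  fix u v assume u: "u \<in> verts H" and v: "v \<in> verts H" and eq: "f u = f v" and ne: "u \<noteq> v"
  obtain A where "A \<in> token_verts H k" "u \<in> A" "v \<notin> A"
    using token_verts_obtain_separating[OF finite_verts_H u v ne] k_ge k_le card_verts_eq by auto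
  then have "flip u \<noteq> flip v" using f_mem_psi[OF u] f_mem_psi[OF v] eq by auto
  moreover obtain A where "A \<in> token_verts H k" "u \<in> A \<longleftrightarrow> v \<in> A"
  proof (cases "2 \<le> k")
    case True
    then show thesis
      using token_verts_obtain[OF finite_verts_H, of "{u, v}" "{}" k] that u v k_le card_verts_eq
      by (force simp: card_insert_le_m1)
  next
    case False
    \<comment> \<open>then \<open>k = 1\<close>, and a vertex other than \<open>u\<close> and \<open>v\<close> is needed\<close>
    then show thesis
      using token_verts_obtain[OF finite_verts_H, of "{}" "{u, v}" k] that u v ne three_le_card card_verts_eq
      by force
  qed
  ultimately show False using f_mem_psi[OF u] f_mem_psi[OF v] eq by auto
qed

lemma image_f: "f ` verts H = verts G"
  using card_subset_eq[of "verts G" "f ` verts H"] simple_G f_in card_image[OF inj_f] card_verts_eq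
  by (auto simp: simple_graph_def)

lemma psi_eq_image:
  assumes A: "A \<in> token_verts H k"
  shows "psi A = f ` {u \<in> verts H. u \<in> A \<longleftrightarrow> \<not> flip u}"
proof (intro equalityI subsetI)
  fix x assume x: "x \<in> psi A"
  then have "x \<in> verts G" using token_verts_subset[OF psi_in_token_verts[OF A]] by blast
  then obtain u where "u \<in> verts H" "x = f u" using image_f by blast
  then show "x \<in> f ` {u \<in> verts H. u \<in> A \<longleftrightarrow> \<not> flip u}" using f_mem_psi[OF _ A] x by auto
qed (use f_mem_psi[OF _ A] in auto)

lemma flip_const:
  assumes "p \<in> verts H" "q \<in> verts H"
  shows "flip p = flip q"
proof (rule ccontr)
  assume "flip p \<noteq> flip q"
  then obtain p q where p: "p \<in> verts H" "\<not> flip p" and q: "q \<in> verts H" "flip q"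
    using assms by blast
  define D where "D A = {u \<in> verts H. u \<in> A \<longleftrightarrow> \<not> flip u}" for A
  have card_D: "card (D A) = k" if "A \<in> token_verts H k" for A
    using psi_eq_image[OF that] psi_in_token_verts[OF that] card_image[OF inj_on_subset[OF inj_f]]
    by (simp add: D_def token_verts_def)
  obtain A where A: "A \<in> token_verts H k" "p \<in> A" "q \<notin> A"
    using token_verts_obtain_separating[OF finite_verts_H p(1) q(1)] p q k_ge k_le card_verts_eq by auto
  have A': "insert q (A - {p}) \<in> token_verts H k"
    using token_verts_swap[OF finite_verts_H A(1,2) q(1) A(3)] .
  have "D (insert q (A - {p})) = D A - {p, q}" "{p, q} \<subseteq> D A"
    using p q A by (auto simp: D_def)
  moreover have "card {p, q} = 2" using A(2,3) by (auto simp: card_insert_if)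
  moreover have "finite (D A)" using finite_verts_H by (simp add: D_def)
  ultimately have "card (D (insert q (A - {p}))) = card (D A) - 2"
    using p q by (simp add: card_Diff_subset)
  then show False using card_D[OF A(1)] card_D[OF A'] k_ge by simp
qed

lemma psi_eq_induced_map: "\<exists>c. psi = induced_map H G k (restrict f (verts H)) c"
proof -
  obtain u0 where u0: "u0 \<in> verts H" using card_verts_eq three_le_card by fastforce
  have bij: "bij_betw (restrict f (verts H)) (verts H) (verts G)"
    using inj_f image_f by (simp add: bij_betw_def)
  have "psi A = induced_map H G k (restrict f (verts H)) (flip u0) A" if A: "A \<in> token_verts H k" for A
  proof -
    have "{u \<in> verts H. u \<in> A \<longleftrightarrow> \<not> flip u} = (if flip u0 then verts H - A else A)"
      using token_verts_subset[OF A] flip_const[OF _ u0] by auto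
    then have "psi A = (if flip u0 then f ` (verts H - A) else f ` A)"
      using psi_eq_image[OF A] by simp
    moreover have "restrict f (verts H) ` A = f ` A" using token_verts_subset[OF A] by auto
    ultimately show ?thesis
      using induced_map_apply[OF bij A] image_f
        inj_on_image_set_diff[OF inj_f Diff_subset token_verts_subset[OF A]] by simp
  qed
  then have "psi = induced_map H G k (restrict f (verts H)) (flip u0)"
    using extensionalityI[OF IsoD(1)[OF psi, simplified] induced_map_extensional] by blast
  then show ?thesis ..
qed

theorem psi_induced: "\<exists>g \<in> Iso H G. \<exists>c. psi = induced_map H G k g c"
proof -
  obtain c where c: "psi = induced_map H G k (restrict f (verts H)) c"
    using psi_eq_induced_map by blast
  have "restrict f (verts H) \<in> Iso H G"
    using Iso_if_induced_map_Iso[OF simple_H simple_G _ _ psi[unfolded c]] inj_f image_f k_ge k_le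
      card_verts_eq by (simp add: bij_betw_def)
  then show ?thesis using c by blast
qed

end

lemma induced_if_kappa_labelled:
  assumes sH: "simple_graph H" and sG: "simple_graph G"
    and card_eq: "card (verts H) = card (verts G)" and three: "3 \<le> card (verts G)"
    and k: "1 \<le> k" "k + 1 \<le> card (verts G)"
    and psi: "psi \<in> Iso (token_graph H k) (token_graph G k)"
    and f: "\<forall>u \<in> verts H. f u \<in> verts G \<and>
      (psi ` kappa H u k = kappa G (f u) k \<or> psi ` kappa H u k = kappa_bar G (f u) k)"
  shows "\<exists>g \<in> Iso H G. \<exists>c. psi = induced_map H G k g c"
proof -
  define flip where "flip u \<longleftrightarrow> psi ` kappa H u k \<noteq> kappa G (f u) k" for u
  have f_in: "f u \<in> verts G" if "u \<in> verts H" for u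
    using f that by blast
  have f_mem_psi: "f u \<in> psi A \<longleftrightarrow> (u \<in> A \<longleftrightarrow> \<not> flip u)"
    if u: "u \<in> verts H" and A: "A \<in> token_verts H k" for u A
  proof -
    have "psi ` kappa H u k = kappa G (f u) k \<or> psi ` kappa H u k = kappa_bar G (f u) k"
      using f u by blast
    then have "psi ` kappa H u k = (if flip u then kappa_bar G (f u) k else kappa G (f u) k)"
      unfolding flip_def by (cases "psi ` kappa H u k = kappa G (f u) k") simp_all
    then show ?thesis
      using iffD1[OF image_kappa_eq_iff[OF IsoD(2)[OF psi, simplified]]] A by blast
  qed
  interpret kappa_labelled_token_iso H G k psi f flip
    by unfold_locales (fact sH sG psi card_eq three k f_in f_mem_psi)+
  show ?thesis by (rule psi_induced)
qed

lemma token_isos_induced_iff_kappa: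
  assumes sH: "simple_graph H" and sG: "simple_graph G"
    and card_eq: "card (verts H) = card (verts G)" and three: "3 \<le> card (verts G)"
    and k: "1 \<le> k" "k + 1 \<le> card (verts G)"
  shows "token_isos_induced H G k \<longleftrightarrow>
    (\<exists>f. \<forall>psi \<in> Iso (token_graph H k) (token_graph G k). \<forall>u \<in> verts H. f psi u \<in> verts G \<and>
       (psi ` kappa H u k = kappa G (f psi u) k \<or> psi ` kappa H u k = kappa_bar G (f psi u) k))"
proof
  assume induced: "token_isos_induced H G k"
  define f where "f psi = (SOME g. g \<in> Iso H G \<and> (\<exists>c. psi = induced_map H G k g c))" for psi
  have "f psi u \<in> verts G \<and>
      (psi ` kappa H u k = kappa G (f psi u) k \<or> psi ` kappa H u k = kappa_bar G (f psi u) k)"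
    if psi: "psi \<in> Iso (token_graph H k) (token_graph G k)" and u: "u \<in> verts H" for psi u
  proof -
    have "\<exists>g. g \<in> Iso H G \<and> (\<exists>c. psi = induced_map H G k g c)"
      using induced psi unfolding token_isos_induced_def by blast
    then have "f psi \<in> Iso H G \<and> (\<exists>c. psi = induced_map H G k (f psi) c)"
      unfolding f_def by (rule someI_ex)
    then obtain c where g: "f psi \<in> Iso H G" and c: "psi = induced_map H G k (f psi) c" by blast
    have "psi ` kappa H u k = (if c then kappa_bar G (f psi u) k else kappa G (f psi u) k)"
      using induced_map_image_kappa[OF IsoD(2)[OF g] u, where k = k and c = c] IsoD(2)[OF psi] c
      by simp
    then show ?thesis using bij_betwE[OF IsoD(2)[OF g]] u by (cases c) auto
  qed
  then show "\<exists>f. \<forall>psi \<in> Iso (token_graph H k) (token_graph G k). \<forall>u \<in> verts H. f psi u \<in> verts G \<and>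
       (psi ` kappa H u k = kappa G (f psi u) k \<or> psi ` kappa H u k = kappa_bar G (f psi u) k)"
    by blast
qed (use induced_if_kappa_labelled[OF assms] in \<open>auto simp: token_isos_induced_def\<close>)

section \<open>The automorphism group of a token graph\<close>

lemma iso_iff_mon_image_eq:
  assumes K: "group K" and fin: "finite (carrier L)" and h: "h \<in> mon K L"
  shows "L \<cong> K \<longleftrightarrow> h ` carrier K = carrier L"
proof
  assume "L \<cong> K"
  moreover have "inj_on h (carrier K)" using h by (simp add: mon_def)
  ultimately have "card (h ` carrier K) = card (carrier L)"
    using iso_same_card card_image by metis
  then show "h ` carrier K = carrier L"
    using card_subset_eq[OF fin hom_carrier] h by (auto simp: mon_def)
next
  assume "h ` carrier K = carrier L"
  then have "h \<in> iso K L" using h by (simp add: iso_iff mon_def)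
  then show "L \<cong> K" using group.iso_sym[OF K is_isoI] by blast
qed

lemma carrier_integer_mod_group_2: "carrier (integer_mod_group 2) = {0, 1}"
  by (auto simp: carrier_integer_mod_group)

lemma finite_Aut_token_graph: "finite (verts G) \<Longrightarrow> finite (Aut (token_graph G k))"
  by (rule finite_Aut) (simp add: finite_token_verts)

lemma token_isos_induced_self_iff:
  "token_isos_induced G G k \<longleftrightarrow> Aut (token_graph G k) \<subseteq> {induced_map G G k s c | s c. s \<in> Aut G}"
  unfolding token_isos_induced_def by (simp add: Aut_def) blast

lemma iota_mon:
  assumes sG: "simple_graph G" and k: "1 \<le> k" "k + 1 \<le> card (verts G)"
  shows "iota G k \<in> mon (aut_group G) (aut_group (token_graph G k))"
proof -
  have fin: "finite (verts G)" using sG by (simp add: simple_graph_def)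
  have "iota G k \<in> hom (aut_group G) (aut_group (token_graph G k))"
  proof (rule homI)
    fix s t assume "s \<in> carrier (aut_group G)" "t \<in> carrier (aut_group G)"
    then have "compose (token_verts G k) (iota G k s) (iota G k t) = iota G k (compose (verts G) s t)"
      using induced_map_compose[OF IsoD(2) IsoD(2), where c = False and d = False and k = k]
      by (simp add: Aut_def induced_map_def)
    then show "iota G k (s \<otimes>\<^bsub>aut_group G\<^esub> t) =
        iota G k s \<otimes>\<^bsub>aut_group (token_graph G k)\<^esub> iota G k t"
      by simp
  qed (use iota_Iso[OF sG sG] in \<open>simp add: Aut_def\<close>)
  moreover have "inj_on (iota G k) (Aut G)"
  proof (rule inj_onI)
    fix s t assume "s \<in> Aut G" "t \<in> Aut G" and eq: "iota G k s = iota G k t"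
    then have "s \<in> Iso G G" "t \<in> Iso G G" by (simp_all add: Aut_def)
    moreover have "s ` A = t ` A" if "A \<in> token_verts G k" for A
      using fun_cong[OF eq, of A] that by simp
    ultimately show "s = t" using Iso_eq_if_images_eq[OF fin _ _ k] by blast
  qed
  ultimately show ?thesis by (simp add: mon_def)
qed

lemma induced_map_mon:
  assumes sG: "simple_graph G" and half: "card (verts G) = 2 * k" and three: "3 \<le> card (verts G)"
  shows "(\<lambda>p. induced_map G G k (fst p) (snd p = 1))
    \<in> mon (aut_group G \<times>\<times> integer_mod_group 2) (aut_group (token_graph G k))"
proof -
  have fin: "finite (verts G)" using sG by (simp add: simple_graph_def)
  have "(\<lambda>p. induced_map G G k (fst p) (snd p = 1))
      \<in> hom (aut_group G \<times>\<times> integer_mod_group 2) (aut_group (token_graph G k))"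
  proof (rule homI)
    fix p q assume "p \<in> carrier (aut_group G \<times>\<times> integer_mod_group 2)"
      and "q \<in> carrier (aut_group G \<times>\<times> integer_mod_group 2)"
    then obtain s i t j where p: "p = (s, i)" "s \<in> Iso G G" "i \<in> {0, 1}"
      and q: "q = (t, j)" "t \<in> Iso G G" "j \<in> {0, 1}"
      by (auto simp: Aut_def carrier_integer_mod_group_2)
    have "((i + j) mod 2 = 1) \<longleftrightarrow> (i = 1) \<noteq> (j = 1)" using p(3) q(3) by auto
    then show "induced_map G G k (fst (p \<otimes>\<^bsub>aut_group G \<times>\<times> integer_mod_group 2\<^esub> q))
        (snd (p \<otimes>\<^bsub>aut_group G \<times>\<times> integer_mod_group 2\<^esub> q) = 1) =
      induced_map G G k (fst p) (snd p = 1) \<otimes>\<^bsub>aut_group (token_graph G k)\<^esub>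
        induced_map G G k (fst q) (snd q = 1)"
      using induced_map_compose[OF IsoD(2)[OF q(2)] IsoD(2)[OF p(2)], where c = "i = 1" and d = "j = 1"]
        p(1) q(1) fin half by simp
  qed (use induced_map_Iso[OF sG sG _ half] in \<open>auto simp: Aut_def\<close>)
  moreover have "inj_on (\<lambda>p. induced_map G G k (fst p) (snd p = 1)) (Aut G \<times> {0, 1::int})"
  proof (rule inj_onI)
    fix p q :: "('a \<Rightarrow> 'a) \<times> int"
    assume pq: "p \<in> Aut G \<times> {0, 1}" "q \<in> Aut G \<times> {0, 1}"
      and eq: "induced_map G G k (fst p) (snd p = 1) = induced_map G G k (fst q) (snd q = 1)"
    have s: "fst p \<in> Iso G G" and t: "fst q \<in> Iso G G" using pq by (auto simp: Aut_def)
    have k: "2 \<le> k" "k + 1 \<le> card (verts G)" using half three by simp_all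
    have "fst p = fst q \<and> (snd p = 1) = (snd q = 1)"
      using induced_map_eq_iff[OF fin s t k] eq by simp
    then show "p = q" using pq by (auto simp: prod_eq_iff)
  qed
  ultimately show ?thesis by (simp add: mon_def carrier_integer_mod_group_2)
qed

lemma aut_token_graph_iso_DirProd_iff:
  assumes sG: "simple_graph G" and half: "card (verts G) = 2 * k" and three: "3 \<le> card (verts G)"
  shows "aut_group (token_graph G k) \<cong> aut_group G \<times>\<times> integer_mod_group 2 \<longleftrightarrow> token_isos_induced G G k"
proof -
  let ?I = "{induced_map G G k s c | s c. s \<in> Aut G}"
  let ?h = "\<lambda>p. induced_map G G k (fst p) (snd p = 1)"
  have mon: "?h \<in> mon (aut_group G \<times>\<times> integer_mod_group 2) (aut_group (token_graph G k))"
    using induced_map_mon[OF sG half three] .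
  have image: "?h ` carrier (aut_group G \<times>\<times> integer_mod_group 2) = ?I"
  proof (intro equalityI subsetI)
    fix psi assume "psi \<in> ?I"
    then obtain s c where "s \<in> Aut G" "psi = induced_map G G k s c" by blast
    then show "psi \<in> ?h ` carrier (aut_group G \<times>\<times> integer_mod_group 2)"
      by (intro image_eqI[where x = "(s, if c then 1 else 0)"]) (auto simp: carrier_integer_mod_group_2)
  qed (auto simp: carrier_integer_mod_group_2)
  have "?h ` carrier (aut_group G \<times>\<times> integer_mod_group 2) \<subseteq> carrier (aut_group (token_graph G k))"
    using hom_carrier mon unfolding mon_def by blast
  then have "?I = Aut (token_graph G k) \<longleftrightarrow> Aut (token_graph G k) \<subseteq> ?I"
    using image by (simp only: set_eq_subset) simp
  moreover have "finite (carrier (aut_group (token_graph G k)))"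
    using finite_Aut_token_graph[of G k] sG by (simp add: simple_graph_def)
  then have "aut_group (token_graph G k) \<cong> aut_group G \<times>\<times> integer_mod_group 2 \<longleftrightarrow>
      ?I = Aut (token_graph G k)"
    using iso_iff_mon_image_eq[OF DirProd_group[OF group_aut_group group_integer_mod_group] _ mon]
      image by simp
  ultimately show ?thesis by (simp add: token_isos_induced_self_iff)
qed

lemma aut_token_graph_iso_iff:
  assumes sG: "simple_graph G" and not_half: "card (verts G) \<noteq> 2 * k"
    and k: "1 \<le> k" "k + 1 \<le> card (verts G)"
  shows "aut_group (token_graph G k) \<cong> aut_group G \<longleftrightarrow> token_isos_induced G G k"
proof -
  let ?I = "{induced_map G G k s c | s c. s \<in> Aut G}"
  have fin: "finite (verts G)" using sG by (simp add: simple_graph_def)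
  have image: "iota G k ` Aut G = ?I \<inter> Aut (token_graph G k)"
  proof (intro equalityI subsetI)
    fix psi assume "psi \<in> ?I \<inter> Aut (token_graph G k)"
    then obtain s c where s: "s \<in> Aut G" and psi: "psi = induced_map G G k s c"
      and aut: "psi \<in> Aut (token_graph G k)" by blast
    have "\<not> c"
      using card_verts_double_if_induced_cmpl_Iso[of s G G k] s aut psi fin k not_half
      by (auto simp: Aut_def IsoD(2))
    then show "psi \<in> iota G k ` Aut G" using s psi by (simp add: induced_map_def)
  next
    fix psi assume "psi \<in> iota G k ` Aut G"
    then show "psi \<in> ?I \<inter> Aut (token_graph G k)"
      using iota_Iso[OF sG sG] by (force simp: Aut_def induced_map_def)
  qed
  have "finite (carrier (aut_group (token_graph G k)))"
    using finite_Aut_token_graph[OF fin] by simp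
  then have "aut_group (token_graph G k) \<cong> aut_group G \<longleftrightarrow>
      ?I \<inter> Aut (token_graph G k) = Aut (token_graph G k)"
    using iso_iff_mon_image_eq[OF group_aut_group _ iota_mon[OF sG k]] image by simp
  also have "\<dots> \<longleftrightarrow> Aut (token_graph G k) \<subseteq> ?I"
    by (rule inf.absorb_iff2[symmetric])
  finally show ?thesis by (simp add: token_isos_induced_self_iff)
qed

theorem theorem9:
  fixes G :: "('a, 'm) sgraph_scheme" and H :: "('b, 'n) sgraph_scheme" and k :: nat
  assumes "simple_graph G" and "simple_graph H" and "isomorphic H G"
    and "card (verts G) \<ge> 3"
    and "1 \<le> k" and "k \<le> card (verts G) - 1"
  shows
    "(uniquely_reconstructible G k \<longleftrightarrow>
        (if 2 * k = card (verts G)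
         then aut_group (token_graph G k) \<cong> DirProd (aut_group G) (integer_mod_group 2)
         else aut_group (token_graph G k) \<cong> aut_group G))
   \<and> ((if 2 * k = card (verts G)
         then aut_group (token_graph G k) \<cong> DirProd (aut_group G) (integer_mod_group 2)
         else aut_group (token_graph G k) \<cong> aut_group G) \<longleftrightarrow>
      (\<forall>psi \<in> Iso (token_graph H k) (token_graph G k).
         \<exists>g \<in> Iso H G. psi = iota H k g \<or>
                        psi = compose (token_verts H k) (cmpl G k) (iota H k g)))
   \<and> ((\<forall>psi \<in> Iso (token_graph H k) (token_graph G k).
         \<exists>g \<in> Iso H G. psi = iota H k g \<or>
                        psi = compose (token_verts H k) (cmpl G k) (iota H k g)) \<longleftrightarrow>
      (\<exists>f. \<forall>psi \<in> Iso (token_graph H k) (token_graph G k).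
         \<forall>u \<in> verts H. f psi u \<in> verts G \<and>
           (psi ` kappa H u k = kappa G (f psi u) k \<or>
            psi ` kappa H u k = kappa_bar G (f psi u) k)))"
proof -
  note sG = assms(1) and sH = assms(2)
  have k: "1 \<le> k" "k + 1 \<le> card (verts G)" using assms(4-6) by simp_all
  obtain g where g: "g \<in> Iso H G" using assms(3) unfolding isomorphic_def by blast
  have card_eq: "card (verts H) = card (verts G)" using bij_betw_same_card[OF IsoD(2)[OF g]] .
  have transport: "token_isos_induced H G k \<longleftrightarrow> token_isos_induced G G k"
    using token_isos_induced_transport[OF sH sG Iso_inv_into[OF g]]
      token_isos_induced_transport[OF sG sH g] by blast
  have aut: "(if 2 * k = card (verts G)
         then aut_group (token_graph G k) \<cong> DirProd (aut_group G) (integer_mod_group 2)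
         else aut_group (token_graph G k) \<cong> aut_group G) \<longleftrightarrow> token_isos_induced G G k"
  proof (cases "2 * k = card (verts G)")
    case True
    then show ?thesis using aut_token_graph_iso_DirProd_iff[OF sG _ assms(4)] by simp
  next
    case False
    then show ?thesis using aut_token_graph_iso_iff[OF sG _ k] by simp
  qed
  show ?thesis
    using uniquely_reconstructible_iff[of G k] aut transport
      token_isos_induced_iff_kappa[OF sH sG card_eq assms(4) k] token_isos_induced_iff[of H G k]
    by simp
qed

end
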